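(* For any $1\le\beta\le m$ and any $x\in\mathbb{R}^n$, $\mathbb{E}_{\mathbb{S}}[a_{i^*}a_{i^*}^T]\preceq\frac{\beta}{m}A^TA$ (in the positive semidefinite order).
   Context: $A\in\mathbb{R}^{m\times n}$ has rows $a_1^T,\dots,a_m^T$ with $\|a_i\|_2=1$, and $b\in\mathbb{R}^m$; $t^+=\max\{t,0\}$. Sampling distribution $\mathbb{S}$ at $x$ (with sample size $\beta$): choose $\tau\subseteq\{1,\dots,m\}$ with $|\tau|=\beta$ uniformly at random among all $\binom m\beta$ subsets and let $i^*\in\tau$ be an index maximizing $(a_i^Tx-b_i)^+$ over $i\in\tau$; $\mathbb{E}_{\mathbb{S}}$ is expectation over $\tau$. *)

theory Defs
  imports "HOL-Analysis.Analysis"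
begin

text \<open>Rows of A :: real^'n^'m are A $ i (i :: 'm); m = CARD('m), n = CARD('n).\<close>

definition pos_part :: "real \<Rightarrow> real" where
  "pos_part t = max t 0"

definition outer_prod :: "real^'n \<Rightarrow> real^'n^'n" where
  "outer_prod u = (\<chi> i j. u $ i * u $ j)"

definition psd_le :: "real^'n^'n \<Rightarrow> real^'n^'n \<Rightarrow> bool" where
  "psd_le P Q \<longleftrightarrow> (\<forall>v. 0 \<le> v \<bullet> ((Q - P) *v v))"

text \<open>Expectation over tau chosen uniformly among all subsets of the row indices of size beta.\<close>
definition subset_expectation :: "nat \<Rightarrow> ('m::finite set \<Rightarrow> 'b::real_vector) \<Rightarrow> 'b" where
  "subset_expectation \<beta> f =
     (1 / real (CARD('m) choose \<beta>)) *\<^sub>R (\<Sum>\<tau>\<in>{\<tau>::'m set. card \<tau> = \<beta>}. f \<tau>)"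

end

theory Submission
  imports Defs
begin

(* Since i* lies in tau, the rank-one matrix a_i* a_i*^T is dominated in the Loewner order by
   the sum of a_i a_i^T over i in tau, and averaging over tau preserves the order. A uniformly
   random beta-subset contains each fixed index with probability beta/m, so the average of that
   sum is (beta/m) (sum_i a_i a_i^T) = (beta/m) A^T A. *)

lemma psd_le_iff_quadratic_form:
  "psd_le P Q \<longleftrightarrow> (\<forall>v. v \<bullet> (P *v v) \<le> v \<bullet> (Q *v v))"
  by (simp add: psd_le_def matrix_vector_mult_diff_rdistrib inner_diff_right)

lemma inner_sum_matrix_vector:
  "finite S \<Longrightarrow> v \<bullet> ((\<Sum>s\<in>S. F s) *v v) = (\<Sum>s\<in>S. v \<bullet> (F s *v v))"
  by (induction S rule: finite_induct)
     (auto simp: matrix_vector_mult_add_rdistrib inner_add_right)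

lemma psd_le_scaleR:
  assumes "0 \<le> c" and "psd_le P Q"
  shows "psd_le (c *\<^sub>R P) (c *\<^sub>R Q)"
  using assms
  by (simp add: psd_le_def scaleR_matrix_vector_assoc[symmetric] flip: scaleR_diff_right)

lemma psd_le_sum_mono:
  assumes "\<And>s. s \<in> S \<Longrightarrow> psd_le (F s) (G s)"
  shows "psd_le (\<Sum>s\<in>S. F s) (\<Sum>s\<in>S. G s)"
proof (cases "finite S")
  case True
  with assms show ?thesis
    by (auto simp: psd_le_iff_quadratic_form inner_sum_matrix_vector intro: sum_mono)
qed (simp add: psd_le_def)

lemma psd_le_subset_expectation_mono:
  assumes "\<And>\<tau>. card \<tau> = \<beta> \<Longrightarrow> psd_le (f \<tau>) (g \<tau>)"
  shows "psd_le (subset_expectation \<beta> f) (subset_expectation \<beta> g)"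
  unfolding subset_expectation_def
  using assms by (intro psd_le_scaleR psd_le_sum_mono) auto

lemma inner_outer_prod_matrix_vector: "v \<bullet> (outer_prod u *v v) = (u \<bullet> v)\<^sup>2"
proof -
  have "v \<bullet> (outer_prod u *v v) = (\<Sum>i\<in>UNIV. v$i * (\<Sum>j\<in>UNIV. u$i * u$j * v$j))"
    by (simp add: outer_prod_def inner_vec_def matrix_vector_mult_def)
  also have "\<dots> = (\<Sum>i\<in>UNIV. u$i * v$i) * (\<Sum>j\<in>UNIV. u$j * v$j)"
    by (simp add: sum_distrib_left sum_distrib_right mult_ac)
  finally show ?thesis
    by (simp add: inner_vec_def power2_eq_square)
qed

lemma psd_le_outer_prod_sum:
  assumes "finite S" and "i \<in> S"
  shows "psd_le (outer_prod (u i)) (\<Sum>j\<in>S. outer_prod (u j))"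
  using assms
  by (auto simp: psd_le_iff_quadratic_form inner_sum_matrix_vector inner_outer_prod_matrix_vector
           intro: member_le_sum)

lemma transpose_mult_self_eq_sum_outer_prod:
  fixes A :: "real^'n^'m"
  shows "transpose A ** A = (\<Sum>i\<in>UNIV. outer_prod (A $ i))"
  by (simp add: vec_eq_iff sum_component matrix_matrix_mult_def transpose_def outer_prod_def)

lemma card_subsets_containing:
  assumes "1 \<le> k"
  shows "card {\<tau>::'m::finite set. card \<tau> = k \<and> i \<in> \<tau>} = (CARD('m) - 1) choose (k - 1)"
proof -
  have "bij_betw (\<lambda>\<tau>. \<tau> - {i}) {\<tau>. card \<tau> = k \<and> i \<in> \<tau>} {B. B \<subseteq> UNIV - {i} \<and> card B = k - 1}"
    by (rule bij_betw_byWitness[where f' = "insert i"])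
       (use assms in \<open>auto simp: card_insert_if\<close>)
  then have "card {\<tau>. card \<tau> = k \<and> i \<in> \<tau>} = card {B. B \<subseteq> UNIV - {i} \<and> card B = k - 1}"
    by (rule bij_betw_same_card)
  also have "\<dots> = card (UNIV - {i}) choose (k - 1)"
    by (rule n_subsets) simp
  finally show ?thesis
    by (simp add: card_Diff_singleton)
qed

lemma sum_subsets_sum_members:
  fixes g :: "'m::finite \<Rightarrow> 'b::real_vector"
  assumes "1 \<le> k"
  shows "(\<Sum>\<tau>\<in>{\<tau>. card \<tau> = k}. \<Sum>i\<in>\<tau>. g i)
           = real ((CARD('m) - 1) choose (k - 1)) *\<^sub>R (\<Sum>i\<in>UNIV. g i)"
proof -
  have "(\<Sum>\<tau>\<in>{\<tau>. card \<tau> = k}. \<Sum>i\<in>\<tau>. g i)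
          = (\<Sum>\<tau>\<in>{\<tau>. card \<tau> = k}. \<Sum>i\<in>{i\<in>UNIV. i \<in> \<tau>}. g i)"
    by simp
  also have "\<dots> = (\<Sum>i\<in>UNIV. \<Sum>\<tau>\<in>{\<tau>\<in>{\<tau>. card \<tau> = k}. i \<in> \<tau>}. g i)"
    by (rule sum.swap_restrict) simp_all
  also have "\<dots> = (\<Sum>i\<in>UNIV. real ((CARD('m) - 1) choose (k - 1)) *\<^sub>R g i)"
    using card_subsets_containing[where 'm='m, OF assms] by (simp add: sum_constant_scaleR)
  finally show ?thesis
    by (simp add: scaleR_sum_right)
qed

lemma subset_expectation_sum_members:
  fixes g :: "'m::finite \<Rightarrow> 'b::real_vector"
  assumes "1 \<le> \<beta>" and "\<beta> \<le> CARD('m)"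
  shows "subset_expectation \<beta> (\<lambda>\<tau>. \<Sum>i\<in>\<tau>. g i) = (real \<beta> / real CARD('m)) *\<^sub>R (\<Sum>i\<in>UNIV. g i)"
proof -
  have "real \<beta> * real (CARD('m) choose \<beta>) = real CARD('m) * real ((CARD('m) - 1) choose (\<beta> - 1))"
    using times_binomial_minus1_eq[of \<beta> "CARD('m)"] assms(1) by (simp flip: of_nat_mult)
  moreover have "real (CARD('m) choose \<beta>) > 0"
    using assms(2) by simp
  ultimately show ?thesis
    unfolding subset_expectation_def sum_subsets_sum_members[OF assms(1)]
    by (simp add: field_simps)
qed

theorem lemma5:
  fixes A :: "real^'n^'m" and b :: "real^'m" and x :: "real^'n"
    and \<beta> :: nat and istar :: "'m set \<Rightarrow> 'm"
  assumes unit_rows: "\<forall>i. norm (A $ i) = 1"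
    and beta_ge: "1 \<le> \<beta>" and beta_le: "\<beta> \<le> CARD('m)"
    and istar: "\<forall>\<tau>::'m set. card \<tau> = \<beta> \<longrightarrow>
        istar \<tau> \<in> \<tau> \<and>
        (\<forall>i\<in>\<tau>. pos_part ((A $ i) \<bullet> x - b $ i) \<le> pos_part ((A $ istar \<tau>) \<bullet> x - b $ istar \<tau>))"
  shows "psd_le (subset_expectation \<beta> (\<lambda>\<tau>. outer_prod (A $ istar \<tau>)))
                ((real \<beta> / real CARD('m)) *\<^sub>R (transpose A ** A))"
proof -
  have "psd_le (subset_expectation \<beta> (\<lambda>\<tau>. outer_prod (A $ istar \<tau>)))
               (subset_expectation \<beta> (\<lambda>\<tau>. \<Sum>i\<in>\<tau>. outer_prod (A $ i)))"
    using istar by (intro psd_le_subset_expectation_mono psd_le_outer_prod_sum) auto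
  also have "subset_expectation \<beta> (\<lambda>\<tau>. \<Sum>i\<in>\<tau>. outer_prod (A $ i))
               = (real \<beta> / real CARD('m)) *\<^sub>R (transpose A ** A)"
    using beta_ge beta_le
    by (simp add: subset_expectation_sum_members transpose_mult_self_eq_sum_outer_prod)
  finally show ?thesis .
qed

end
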